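(* For integers $N\ge 1$ and $n\ge 1$, $$B_{N,n}=n!\sum_{k=1}^{n}\ \sum_{\substack{i_1+\cdots+i_k=n\\ i_1,\dots,i_k\ge 1}}\frac{(-N!)^k}{(N+i_1)!\cdots(N+i_k)!},$$ where the inner sum runs over all $k$-tuples of positive integers $(i_1,\dots,i_k)$ with sum $n$.
   Context: For a positive integer $N$, the hypergeometric Bernoulli numbers $B_{N,n}$ ($n\ge 0$) are defined by $$\frac{x^N/N!}{e^x-\sum_{n=0}^{N-1}x^n/n!}=\sum_{n=0}^\infty B_{N,n}\frac{x^n}{n!}.$$ *)

theory Defs
  imports "HOL-Computational_Algebra.Formal_Power_Series"
begin

definition hyp_bernoulli_gf :: "nat \<Rightarrow> real fps" where
  "hyp_bernoulli_gf N =
     (fps_const (1 / fact N) * fps_X ^ N) /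
     (fps_exp 1 - (\<Sum>m<N. fps_const (1 / fact m) * fps_X ^ m))"

definition hyp_bernoulli :: "nat \<Rightarrow> nat \<Rightarrow> real" where
  "hyp_bernoulli N n = fact n * fps_nth (hyp_bernoulli_gf N) n"

definition compositions :: "nat \<Rightarrow> nat \<Rightarrow> nat list set" where
  "compositions n k = {is. length is = k \<and> (\<forall>i\<in>set is. 1 \<le> i) \<and> sum_list is = n}"

end

theory Submission
  imports Defs
begin

text \<open>Cancelling \<open>x\<^sup>N/N!\<close> from numerator and denominator turns the generating
  function into \<open>1/(1 - G)\<close>, where \<open>G = - \<Sum>j\<ge>1. N! x\<^sup>j / (N+j)!\<close> has no constant term.
  So the \<open>n\<close>-th coefficient is \<open>\<Sum>k\<le>n. [x\<^sup>n] G\<^sup>k\<close>, and expanding \<open>G\<^sup>k\<close> multiplies out one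
  coefficient of \<open>G\<close> per part of a composition of \<open>n\<close> into \<open>k\<close> parts.\<close>

lemma finite_compositions: "finite (compositions n k)"
proof (rule finite_subset)
  show "compositions n k \<subseteq> {xs. set xs \<subseteq> {0..n} \<and> length xs = k}"
    by (auto simp: compositions_def member_le_sum_list)
  show "finite {xs. set xs \<subseteq> {0..n} \<and> length xs = k}"
    by (rule finite_lists_length_eq) simp
qed

lemma compositions_0_parts: "compositions n 0 = (if n = 0 then {[]} else {})"
  by (auto simp: compositions_def)

lemma compositions_Suc_parts:
  "compositions n (Suc k) = (\<Union>j\<in>{1..n}. (#) j ` compositions (n - j) k)"
proof
  show "compositions n (Suc k) \<subseteq> (\<Union>j\<in>{1..n}. (#) j ` compositions (n - j) k)"
  proof
    fix xs assume "xs \<in> compositions n (Suc k)"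
    then obtain j ys where xs: "xs = j # ys" "length ys = k" "1 \<le> j" "\<forall>i\<in>set ys. 1 \<le> i"
      "j + sum_list ys = n"
      by (auto simp: compositions_def length_Suc_conv)
    then have "ys \<in> compositions (n - j) k" "j \<in> {1..n}"
      by (auto simp: compositions_def)
    with xs(1) show "xs \<in> (\<Union>j\<in>{1..n}. (#) j ` compositions (n - j) k)"
      by blast
  qed
qed (auto simp: compositions_def)

lemma sum_compositions_Suc_parts:
  fixes c :: "nat \<Rightarrow> 'a::comm_semiring_1"
  shows "(\<Sum>is\<in>compositions n (Suc k). prod_list (map c is)) =
    (\<Sum>j=1..n. c j * (\<Sum>is\<in>compositions (n - j) k. prod_list (map c is)))"
proof -
  have "(\<Sum>is\<in>compositions n (Suc k). prod_list (map c is)) =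
      (\<Sum>j=1..n. \<Sum>is\<in>(#) j ` compositions (n - j) k. prod_list (map c is))"
    unfolding compositions_Suc_parts
    by (rule sum.UNION_disjoint) (auto simp: finite_compositions)
  also have "\<dots> = (\<Sum>j=1..n. c j * (\<Sum>is\<in>compositions (n - j) k. prod_list (map c is)))"
    by (rule sum.cong) (auto simp: sum.reindex sum_distrib_left)
  finally show ?thesis .
qed

lemma fps_nth_power_eq_sum_compositions:
  fixes c :: "nat \<Rightarrow> 'a::comm_semiring_1"
  assumes "c 0 = 0"
  shows "fps_nth (Abs_fps c ^ k) n = (\<Sum>is\<in>compositions n k. prod_list (map c is))"
proof (induction k arbitrary: n)
  case 0
  then show ?case by (simp add: compositions_0_parts)
next
  case (Suc k)
  have "fps_nth (Abs_fps c ^ Suc k) n =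
      (\<Sum>j=0..n. c j * (\<Sum>is\<in>compositions (n - j) k. prod_list (map c is)))"
    by (simp add: fps_mult_nth Suc)
  also have "\<dots> = (\<Sum>j=1..n. c j * (\<Sum>is\<in>compositions (n - j) k. prod_list (map c is)))"
    using assms by (simp add: sum.atLeast_Suc_atMost)
  finally show ?case by (simp add: sum_compositions_Suc_parts)
qed

lemma fps_nth_one_div_one_minus:
  fixes G :: "'a::field fps"
  assumes "fps_nth G 0 = 0"
  shows "fps_nth (1 / (1 - G)) n = (\<Sum>k=0..n. fps_nth (G ^ k) n)"
  by (simp add: gp[OF assms, symmetric] fps_compose_nth)

lemma fps_exp_minus_partial_sum:
  "fps_exp (1::'a::field_char_0) - (\<Sum>m<N. fps_const (1 / fact m) * fps_X ^ m) =
    fps_X ^ N * Abs_fps (\<lambda>j. 1 / fact (N + j))"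
  by (rule fps_ext)
    (simp add: fps_X_power_mult_nth fps_sum_nth if_distrib[of "\<lambda>x. x / _"] sum.delta
      cong: if_cong)

lemma hyp_bernoulli_gf_eq_one_div_one_minus:
  "hyp_bernoulli_gf N =
    1 / (1 - Abs_fps (\<lambda>j. if j = 0 then 0 else - (fact N / fact (N + j))))"
    (is "_ = 1 / (1 - ?G)")
proof -
  have tail: "Abs_fps (\<lambda>j. 1 / fact (N + j)) = (1 - ?G) * fps_const (1 / fact N :: real)"
    by (rule fps_ext) simp
  have "hyp_bernoulli_gf N =
      (1 * fps_const (1 / fact N) * fps_X ^ N) / ((1 - ?G) * fps_const (1 / fact N) * fps_X ^ N)"
    unfolding hyp_bernoulli_gf_def fps_exp_minus_partial_sum tail by (simp add: mult.commute)
  also have "\<dots> = (1 * fps_const (1 / fact N)) / ((1 - ?G) * fps_const (1 / fact N))"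
    by (rule fps_divide_cancel) simp
  also have "\<dots> = 1 / (1 - ?G)"
    by (rule fps_divide_cancel) simp
  finally show ?thesis .
qed

lemma prod_list_neg_fact_ratio:
  "\<forall>i\<in>set is. 1 \<le> i \<Longrightarrow>
    (\<Prod>j\<leftarrow>is. if j = 0 then 0 else - (fact N / fact (N + j) :: 'a::field_char_0)) =
    (- fact N) ^ length is / (\<Prod>i\<leftarrow>is. fact (N + i))"
  by (induction "is") auto

theorem proposition2:
  fixes N n :: nat
  assumes "N \<ge> 1" and "n \<ge> 1"
  shows "hyp_bernoulli N n =
    fact n * (\<Sum>k=1..n. \<Sum>is\<in>compositions n k.
       (- fact N) ^ k / (\<Prod>i\<leftarrow>is. fact (N + i)))"
proof -
  define c :: "nat \<Rightarrow> real" where "c = (\<lambda>j. if j = 0 then 0 else - (fact N / fact (N + j)))"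
  have "fps_nth (hyp_bernoulli_gf N) n = (\<Sum>k=0..n. fps_nth (Abs_fps c ^ k) n)"
    by (simp add: hyp_bernoulli_gf_eq_one_div_one_minus fps_nth_one_div_one_minus c_def)
  also have "\<dots> = (\<Sum>k=1..n. \<Sum>is\<in>compositions n k. prod_list (map c is))"
    using \<open>n \<ge> 1\<close>
    by (simp add: fps_nth_power_eq_sum_compositions c_def sum.atLeast_Suc_atMost
      compositions_0_parts)
  also have "\<dots> = (\<Sum>k=1..n. \<Sum>is\<in>compositions n k.
       (- fact N) ^ k / (\<Prod>i\<leftarrow>is. fact (N + i)))"
    by (intro sum.cong refl)
      (auto simp: compositions_def c_def prod_list_neg_fact_ratio)
  finally show ?thesis
    by (simp add: hyp_bernoulli_def)
qed

end
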